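(* In the safe linear bandit setting with ROFUL as described in the context (with all its standing assumptions), on the event $\mathcal{E}_{\mathrm{conf}}$, for all $t\in[T]$, $$\theta^\top(\tilde x_t-x_t)\le S_\theta\frac{2\beta_t}{b}\|x_t\|_{V_t^{-1}}.$$
   Context: Safe linear bandit setting: at round $t$ the learner plays $x_t$ in a closed set $\mathcal{X}\subseteq\mathbb{R}^d$ and observes $y_t=\theta^\top x_t+\epsilon_t$, $z_t=a^\top x_t+\eta_t$, with $\theta,a$ unknown and $b>0$ known; $\mathcal{Y}=\{x\in\mathcal{X}:a^\top x\le b\}$, $x_*\in\arg\max_{\mathcal{Y}}\theta^\top x$. Standing assumptions: $\mathcal{X}$ star-convex w.r.t. the origin, $\|x\|\le1$ on $\mathcal{X}$, $\theta^\top x_*>0$; $\|a\|\le S_a$, $\|\theta\|\le S_\theta$, $S=\max(S_a,S_\theta)$, $\nu=b/S_a\le1$. Parameters $\rho>0$, $\delta\in(0,1)$, $\lambda\ge1$. ROFUL: $V_t=\lambda I+\sum_{k<t}x_kx_k^\top$, $\hat a_t=V_t^{-1}\sum_{k<t}x_kz_k$, $\hat\theta_t=V_t^{-1}\sum_{k<t}x_ky_k$, $\beta_t=\rho\sqrt{d\log\left(\frac{1+(t-1)/\lambda}{\delta/2}\right)}+\sqrt\lambda S$, $\|x\|_M=\sqrt{x^\top Mx}$; $\mathcal{Y}_t^p=\{x\in\mathcal{X}:\hat a_t^\top x+\beta_t\|x\|_{V_t^{-1}}\le b\}$, $\mathcal{Y}_t^o=\{x\in\mathcal{X}:\hat a_t^\top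 x-\beta_t\|x\|_{V_t^{-1}}\le b\}$; $\tilde x_t\in\arg\max_{x\in\mathcal{Y}_t^o}(\hat\theta_t^\top x+\beta_t\|x\|_{V_t^{-1}})$; $\gamma_t=\max(\min(\nu/\|\tilde x_t\|,1),\max\{\mu\in[0,1]:\mu\tilde x_t\in\mathcal{Y}_t^p\})$; play $x_t=\gamma_t\tilde x_t$. $\mathcal{E}_{\mathrm{conf}}$: the event that $|x^\top(\hat\theta_t-\theta)|\le\beta_t\|x\|_{V_t^{-1}}$ and $|x^\top(\hat a_t-a)|\le\beta_t\|x\|_{V_t^{-1}}$ for all $x\in\mathcal{X}$ and all $t\ge1$. *)

theory Defs
  imports "HOL-Analysis.Analysis"
begin

text \<open>Safe linear bandits, ROFUL. Rounds are indexed t = 1, 2, ...; vectors live in real^'d,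
  with d = CARD('d).\<close>

definition outer :: "real^'d \<Rightarrow> real^'d^'d" where
  "outer u = (\<chi> i j. u$i * u$j)"

definition Vmat :: "real \<Rightarrow> (nat \<Rightarrow> real^'d) \<Rightarrow> nat \<Rightarrow> real^'d^'d" where
  "Vmat lam x t = lam *\<^sub>R mat 1 + (\<Sum>k\<in>{1..<t}. outer (x k))"

definition wnorm :: "real^'d^'d \<Rightarrow> real^'d \<Rightarrow> real" where
  "wnorm M u = sqrt (u \<bullet> (M *v u))"

definition est :: "real \<Rightarrow> (nat \<Rightarrow> real^'d) \<Rightarrow> (nat \<Rightarrow> real) \<Rightarrow> nat \<Rightarrow> real^'d" where
  "est lam x obs t = matrix_inv (Vmat lam x t) *v (\<Sum>k\<in>{1..<t}. obs k *\<^sub>R x k)"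

definition beta :: "real \<Rightarrow> nat \<Rightarrow> real \<Rightarrow> real \<Rightarrow> real \<Rightarrow> nat \<Rightarrow> real" where
  "beta rho d delta lam S t =
     rho * sqrt (real d * ln ((1 + (real t - 1) / lam) / (delta / 2))) + sqrt lam * S"

definition Yp :: "(real^'d) set \<Rightarrow> real \<Rightarrow> real^'d \<Rightarrow> real \<Rightarrow> real^'d^'d \<Rightarrow> (real^'d) set" where
  "Yp X b ahat bt Vinv = {u \<in> X. ahat \<bullet> u + bt * wnorm Vinv u \<le> b}"

definition Yo :: "(real^'d) set \<Rightarrow> real \<Rightarrow> real^'d \<Rightarrow> real \<Rightarrow> real^'d^'d \<Rightarrow> (real^'d) set" where
  "Yo X b ahat bt Vinv = {u \<in> X. ahat \<bullet> u - bt * wnorm Vinv u \<le> b}"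

text \<open>gamma_t = max(min(nu/\<parallel>x~\<parallel>,1), max{mu in [0,1]. mu x~ in Y_t^p}).
  (When x~ = 0 the value of gamma is irrelevant since x_t = gamma x~ = 0.)\<close>
definition gam :: "real \<Rightarrow> (real^'d) set \<Rightarrow> real^'d \<Rightarrow> real" where
  "gam nu Ypt xt = max (min (nu / norm xt) 1) (Sup {mu \<in> {0..1}. mu *\<^sub>R xt \<in> Ypt})"

end

theory Submission
  imports Defs
begin

text \<open>The played action is the optimistic action \<open>x~\<close> shrunk by the factor \<open>\<gamma> \<in> [0,1]\<close>, so the
  reward lost is \<open>(1 - \<gamma>) \<theta>\<^sup>T x~ \<le> (1 - \<gamma>) S\<^sub>\<theta>\<close>. Write \<open>\<parallel>.\<parallel>\<close> for the \<open>V\<^sub>t\<^sup>-\<^sup>1\<close>-norm and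
  \<open>c = a\<^sub>t\<^sup>T x~ + \<beta> \<parallel>x~\<parallel>\<close> with the estimate \<open>a\<^sub>t\<close>. If \<open>\<gamma> < 1\<close>, then \<open>x~\<close> is not pessimistically
  safe, so \<open>c > b\<close>, and its scaling by \<open>b / c\<close> is pessimistically safe, hence \<open>b \<le> \<gamma> c\<close>. Optimistic
  feasibility of \<open>x~\<close> gives \<open>c \<le> b + 2 \<beta> \<parallel>x~\<parallel>\<close>, so \<open>b (1 - \<gamma>) \<le> 2 \<beta> \<gamma> \<parallel>x~\<parallel> = 2 \<beta> \<parallel>x\<parallel>\<close>.\<close>

lemma wnorm_scaleR: "wnorm M (c *\<^sub>R u) = \<bar>c\<bar> * wnorm M u"
proof -
  have "(c *\<^sub>R u) \<bullet> (M *v (c *\<^sub>R u)) = c\<^sup>2 * (u \<bullet> (M *v u))"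
    by (simp add: matrix_vector_mult_scaleR power2_eq_square)
  then show ?thesis
    unfolding wnorm_def by (simp add: real_sqrt_mult)
qed

lemma scaleR_mem_Yp:
  assumes X_star: "\<And>v \<mu>. v \<in> X \<Longrightarrow> 0 \<le> \<mu> \<Longrightarrow> \<mu> \<le> 1 \<Longrightarrow> \<mu> *\<^sub>R v \<in> X"
    and "u \<in> X" "0 \<le> \<mu>" "\<mu> \<le> 1" "\<mu> * (A \<bullet> u + B * wnorm M u) \<le> b"
  shows "\<mu> *\<^sub>R u \<in> Yp X b A B M"
  using assms X_star[of u \<mu>] unfolding Yp_def
  by (simp add: wnorm_scaleR algebra_simps)

lemma gam_ge_scale:
  assumes "0 \<le> \<mu>" "\<mu> \<le> 1" "\<mu> *\<^sub>R u \<in> P"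
  shows "\<mu> \<le> gam \<nu> P u"
proof -
  have "\<mu> \<le> Sup {\<mu> \<in> {0..1}. \<mu> *\<^sub>R u \<in> P}"
    using assms by (intro cSup_upper) (auto intro: bdd_aboveI[of _ 1])
  then show ?thesis
    unfolding gam_def by linarith
qed

lemma gam_le_one:
  assumes "0 \<in> P"
  shows "gam \<nu> P u \<le> 1"
proof -
  have "0 \<in> {\<mu> \<in> {0..1}. \<mu> *\<^sub>R u \<in> P}"
    using assms by simp
  then have "Sup {\<mu> \<in> {0..1}. \<mu> *\<^sub>R u \<in> P} \<le> 1"
    by (intro cSup_least) (blast, simp)
  then show ?thesis
    unfolding gam_def by linarith
qed

lemma gam_Yp_shortfall:
  fixes \<nu> :: real
  assumes X_star: "\<And>v \<mu>. v \<in> X \<Longrightarrow> 0 \<le> \<mu> \<Longrightarrow> \<mu> \<le> 1 \<Longrightarrow> \<mu> *\<^sub>R v \<in> X"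
    and u_opt: "u \<in> Yo X b A B M"
    and width_nonneg: "0 \<le> B * wnorm M u"
    and b_pos: "0 < b"
  defines "\<gamma> \<equiv> gam \<nu> (Yp X b A B M) u"
  shows "0 \<le> \<gamma>" "\<gamma> \<le> 1" "b * (1 - \<gamma>) \<le> 2 * B * wnorm M (\<gamma> *\<^sub>R u)"
proof -
  define c where "c = A \<bullet> u + B * wnorm M u"
  have uX: "u \<in> X" and c_le: "c \<le> b + 2 * B * wnorm M u"
    using u_opt unfolding Yo_def c_def by auto
  have safe: "\<mu> \<le> \<gamma>" if "0 \<le> \<mu>" "\<mu> \<le> 1" "\<mu> * c \<le> b" for \<mu>
    unfolding \<gamma>_def using that c_def
    by (intro gam_ge_scale scaleR_mem_Yp[OF X_star uX]) auto
  show \<gamma>_nonneg: "0 \<le> \<gamma>"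
    using safe[of 0] b_pos by simp
  have "0 \<in> Yp X b A B M"
    using scaleR_mem_Yp[OF X_star uX, of 0] b_pos by simp
  then show \<gamma>_le: "\<gamma> \<le> 1"
    unfolding \<gamma>_def by (rule gam_le_one)
  have "b * (1 - \<gamma>) \<le> 2 * B * \<gamma> * wnorm M u"
  proof (cases "\<gamma> = 1")
    case True
    then show ?thesis using width_nonneg by simp
  next
    case False
    have c_gt: "b < c"
      using safe[of 1] False \<gamma>_le by fastforce
    then have "b / c \<le> \<gamma>"
      using b_pos by (intro safe) auto
    then have "b \<le> \<gamma> * c"
      using c_gt b_pos by (simp add: divide_le_eq mult.commute)
    also have "\<dots> \<le> \<gamma> * (b + 2 * B * wnorm M u)"
      using c_le \<gamma>_nonneg by (rule mult_left_mono)
    finally show ?thesis by (simp add: algebra_simps)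
  qed
  then show "b * (1 - \<gamma>) \<le> 2 * B * wnorm M (\<gamma> *\<^sub>R u)"
    using \<gamma>_nonneg by (simp add: wnorm_scaleR)
qed

lemma inner_le_of_norm_le:
  fixes \<theta> u :: "'a::real_inner"
  assumes "norm \<theta> \<le> S" "norm u \<le> 1"
  shows "\<theta> \<bullet> u \<le> S"
proof -
  have "\<theta> \<bullet> u \<le> norm \<theta> * norm u"
    by (rule norm_cauchy_schwarz)
  also have "\<dots> \<le> S * 1"
    using assms order_trans[OF norm_ge_zero assms(1)] by (intro mult_mono) simp_all
  finally show ?thesis by simp
qed

theorem lemma5:
  fixes X :: "(real^'d) set"
    and theta a :: "real^'d"
    and b S_a S_theta rho delta lam :: real
    and eps eta :: "nat \<Rightarrow> real"
    and x xt :: "nat \<Rightarrow> real^'d"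
    and xstar :: "real^'d"
    and T :: nat
  defines "nu \<equiv> b / S_a"
    and "Y \<equiv> {u \<in> X. a \<bullet> u \<le> b}"
    and "Vinv \<equiv> (\<lambda>t. matrix_inv (Vmat lam x t))"
    and "ahat \<equiv> est lam x (\<lambda>k. a \<bullet> x k + eta k)"
    and "thhat \<equiv> est lam x (\<lambda>k. theta \<bullet> x k + eps k)"
    and "bt \<equiv> beta rho CARD('d) delta lam (max S_a S_theta)"
  assumes X_closed: "closed X"
    and X_star: "\<And>u \<mu>. u \<in> X \<Longrightarrow> 0 \<le> \<mu> \<Longrightarrow> \<mu> \<le> 1 \<Longrightarrow> \<mu> *\<^sub>R u \<in> X"
    and X_bounded: "\<And>u. u \<in> X \<Longrightarrow> norm u \<le> 1"
    and b_pos: "b > 0"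
    and S_a_pos: "S_a > 0"
    and a_bound: "norm a \<le> S_a"
    and theta_bound: "norm theta \<le> S_theta"
    and nu_le: "nu \<le> 1"
    and rho_pos: "rho > 0"
    and delta: "0 < delta" "delta < 1"
    and lam: "lam \<ge> 1"
    and xstar_in: "xstar \<in> Y"
    and xstar_opt: "\<And>u. u \<in> Y \<Longrightarrow> theta \<bullet> u \<le> theta \<bullet> xstar"
    and xstar_pos: "theta \<bullet> xstar > 0"
    \<comment> \<open>ROFUL: optimistic action and played action, for every round t \<ge> 1\<close>
    and xt_in: "\<And>t. t \<ge> 1 \<Longrightarrow> xt t \<in> Yo X b (ahat t) (bt t) (Vinv t)"
    and xt_opt: "\<And>t u. t \<ge> 1 \<Longrightarrow> u \<in> Yo X b (ahat t) (bt t) (Vinv t) \<Longrightarrow>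
        thhat t \<bullet> u + bt t * wnorm (Vinv t) u
          \<le> thhat t \<bullet> xt t + bt t * wnorm (Vinv t) (xt t)"
    and x_play: "\<And>t. t \<ge> 1 \<Longrightarrow>
        x t = gam nu (Yp X b (ahat t) (bt t) (Vinv t)) (xt t) *\<^sub>R xt t"
    \<comment> \<open>the event E_conf\<close>
    and conf_theta: "\<And>t u. t \<ge> 1 \<Longrightarrow> u \<in> X \<Longrightarrow>
        \<bar>u \<bullet> (thhat t - theta)\<bar> \<le> bt t * wnorm (Vinv t) u"
    and conf_a: "\<And>t u. t \<ge> 1 \<Longrightarrow> u \<in> X \<Longrightarrow>
        \<bar>u \<bullet> (ahat t - a)\<bar> \<le> bt t * wnorm (Vinv t) u"
  shows "\<forall>t\<in>{1..T}. theta \<bullet> (xt t - x t) \<le> S_theta * (2 * bt t / b) * wnorm (Vinv t) (x t)"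
proof
  fix t assume "t \<in> {1..T}"
  then have t: "t \<ge> 1" by simp
  define \<gamma> where "\<gamma> = gam nu (Yp X b (ahat t) (bt t) (Vinv t)) (xt t)"
  have x_t: "x t = \<gamma> *\<^sub>R xt t"
    using x_play[OF t] unfolding \<gamma>_def .
  have xt_X: "xt t \<in> X"
    using xt_in[OF t] unfolding Yo_def by simp
  have "0 \<le> bt t * wnorm (Vinv t) (xt t)"
    using conf_a[OF t xt_X] by linarith
  note shortfall = gam_Yp_shortfall[where \<nu> = nu, OF X_star xt_in[OF t] this b_pos, folded \<gamma>_def x_t]
  have "theta \<bullet> (xt t - x t) = (1 - \<gamma>) * (theta \<bullet> xt t)"
    unfolding x_t by (simp add: inner_diff_right algebra_simps)
  also have "\<dots> \<le> (1 - \<gamma>) * S_theta"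
    using shortfall(2) inner_le_of_norm_le[OF theta_bound X_bounded[OF xt_X]]
    by (intro mult_left_mono) auto
  also have "\<dots> \<le> S_theta * (2 * bt t / b) * wnorm (Vinv t) (x t)"
  proof -
    have "1 - \<gamma> \<le> (2 * bt t / b) * wnorm (Vinv t) (x t)"
      using shortfall(3) b_pos by (simp add: field_simps)
    then have "S_theta * (1 - \<gamma>) \<le> S_theta * ((2 * bt t / b) * wnorm (Vinv t) (x t))"
      using order_trans[OF norm_ge_zero theta_bound] by (rule mult_left_mono)
    then show ?thesis
      by (simp only: ac_simps)
  qed
  finally show "theta \<bullet> (xt t - x t) \<le> S_theta * (2 * bt t / b) * wnorm (Vinv t) (x t)" .
qed

end
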